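(* Let $n\ge 2$ and let $k_n$ be the maximum diameter of a connected component of the cyclic shift graph $K({\mathsf{plac}}_n)$. Then $n-1\le k_n\le 2n-3$.
   Context: Let $\mathcal{A}=\{1<2<3<\cdots\}$ be the ordered alphabet of positive integers and $\mathcal{A}_n=\{1<2<\cdots<n\}$. For a monoid $M$ and $s,t\in M$, write $s\sim t$ if there exist $x,y\in M$ with $s=xy$ and $t=yx$ (a cyclic shift); $\sim^*$ is the reflexive–transitive closure of $\sim$. The cyclic shift graph $K(M)$ is the undirected graph with vertex set $M$ and an edge between $s$ and $t$ iff $s\sim t$; its connected components are the $\sim^*$-classes, and distances/diameters are graph distances in $K(M)$. The evaluation of a word $w$ is the tuple $(|w|_a)_{a}$ giving the number of occurrences of each letter $a$; all monoids considered are defined by presentations whose defining relations preserve evaluation, so the evaluation of an element is well defined, and $s\equiv_{\mathrm{ev}} t$ means $s$ and $t$ have the same evaluation. The plactic monoid of rank $n$, ${\mathsf{plac}}_n$, is $\mathcal{A}_n^*$ modulo the congruence generated by the Knuth relations $acb=cab$ for letters $a\le b<c$ and $bac=bca$ for letters $a<b\le c$ (all letters in $\mathcal{A}_n$). It is known (and may be used) that connected components of $K({\mathsf{plac}}_n)$ are exactly the $\equiv_{\mathrm{ev}}$-classes, and that elements of ${\mathsf{plac}}_n$ correspond bijectively to semistandard Young tableaux with entries in $\mathcal{A}_n$ via Schensted insertion. *)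

theory Defs
  imports Main "HOL-Library.Extended_Nat"
begin

inductive knuth_step :: "nat \<Rightarrow> nat list \<Rightarrow> nat list \<Rightarrow> bool" for n :: nat where
  knuth1: "\<lbrakk> u \<in> lists {1..n}; v \<in> lists {1..n}; a \<in> {1..n}; b \<in> {1..n}; c \<in> {1..n};
            a \<le> b; b < c \<rbrakk> \<Longrightarrow> knuth_step n (u @ [a, c, b] @ v) (u @ [c, a, b] @ v)"
| knuth2: "\<lbrakk> u \<in> lists {1..n}; v \<in> lists {1..n}; a \<in> {1..n}; b \<in> {1..n}; c \<in> {1..n};
            a < b; b \<le> c \<rbrakk> \<Longrightarrow> knuth_step n (u @ [b, a, c] @ v) (u @ [b, c, a] @ v)"

definition plac_equiv :: "nat \<Rightarrow> nat list \<Rightarrow> nat list \<Rightarrow> bool" where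
  "plac_equiv n = equivclp (knuth_step n)"

(* The element of plac_n represented by the word w: its congruence class. *)
definition plac_class :: "nat \<Rightarrow> nat list \<Rightarrow> nat list set" where
  "plac_class n w = {v \<in> lists {1..n}. plac_equiv n w v}"

definition plac_elems :: "nat \<Rightarrow> nat list set set" where
  "plac_elems n = plac_class n ` lists {1..n}"

(* Cyclic shift s ~ t in plac_n: s = xy and t = yx for some x, y in plac_n;
   the product of the classes of words x and y is the class of x @ y. *)
definition plac_cshift :: "nat \<Rightarrow> nat list set \<Rightarrow> nat list set \<Rightarrow> bool" where
  "plac_cshift n s t \<longleftrightarrow> (\<exists>x \<in> lists {1..n}. \<exists>y \<in> lists {1..n}.
       s = plac_class n (x @ y) \<and> t = plac_class n (y @ x))"

(* Graph distance in the cyclic shift graph K(plac_n) (meaningful for connected s, t). *)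
definition plac_dist :: "nat \<Rightarrow> nat list set \<Rightarrow> nat list set \<Rightarrow> nat" where
  "plac_dist n s t = (LEAST k. (plac_cshift n ^^ k) s t)"

definition plac_component :: "nat \<Rightarrow> nat list set \<Rightarrow> nat list set set" where
  "plac_component n s = {t. (plac_cshift n)\<^sup>*\<^sup>* s t}"

definition comp_diameter :: "nat \<Rightarrow> nat list set set \<Rightarrow> enat" where
  "comp_diameter n C = (SUP p \<in> C \<times> C. enat (plac_dist n (fst p) (snd p)))"

definition k_plac :: "nat \<Rightarrow> enat" where
  "k_plac n = (SUP s \<in> plac_elems n. comp_diameter n (plac_component n s))"

end

theory Submission
  imports Defs "HOL-Library.Multiset"
begin

text \<open>
Upper bound: by Schensted's row insertion, a word \<open>T v\<close> with \<open>T\<close> weakly increasing and all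
letters of \<open>v\<close> greater than \<open>j\<close> is plactic-equivalent to \<open>Z T'\<close> with \<open>T'\<close> weakly increasing
and all letters of \<open>Z\<close> (the bumped ones) greater than \<open>j + 1\<close>; the cyclic shift to \<open>T' Z\<close>
raises \<open>j\<close> by one. Hence within \<open>n - 2\<close> shifts every element reaches the class of a word
\<open>n\<^sup>a T\<close> with \<open>T\<close> weakly increasing, and two such classes of equal content are one cyclic
shift apart: any two elements of a component are joined by a path of length \<open>2(n - 2) + 1\<close>.

Lower bound: on words with content \<open>{1, \<dots>, n}\<close>, the number of \<open>i\<close> such that \<open>i + 1\<close> occurs
before \<open>i\<close> is invariant under the Knuth relations and changes by at most one under a cyclic
shift. It is \<open>n - 1\<close> for the column \<open>n \<cdots> 1\<close> and \<open>0\<close> for the row \<open>1 \<cdots> n\<close>.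
\<close>

abbreviation words :: "nat \<Rightarrow> nat list set" where
  "words n \<equiv> lists {1..n}"

lemma knuth_step_mset: "knuth_step n w w' \<Longrightarrow> mset w = mset w'"
  by (induction rule: knuth_step.induct) (auto simp: add_mset_commute)

lemma knuth_step_append_context:
  assumes "knuth_step n w w'" "u \<in> words n" "v \<in> words n"
  shows "knuth_step n (u @ w @ v) (u @ w' @ v)"
  using assms(1)
proof (cases rule: knuth_step.cases)
  case (knuth1 u' v' a b c)
  then show ?thesis using knuth_step.knuth1[of "u @ u'" n "v' @ v" a b c] assms by auto
next
  case (knuth2 u' v' a b c)
  then show ?thesis using knuth_step.knuth2[of "u @ u'" n "v' @ v" a b c] assms by auto
qed

lemma plac_equiv_refl [simp]: "plac_equiv n w w"
  unfolding plac_equiv_def by simp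

lemma plac_equiv_sym: "plac_equiv n w w' \<Longrightarrow> plac_equiv n w' w"
  unfolding plac_equiv_def by (rule equivclp_sym)

lemma plac_equiv_trans [trans]: "plac_equiv n w w' \<Longrightarrow> plac_equiv n w' w'' \<Longrightarrow> plac_equiv n w w''"
  unfolding plac_equiv_def by (rule equivclp_trans)

lemma equivclp_invariant:
  assumes "equivclp r a b" "\<And>y z. r y z \<Longrightarrow> f y = f z"
  shows "f a = f b"
  using assms(1) by (induction rule: equivclp_induct) (auto dest: assms(2))

lemma plac_equiv_invariant:
  "plac_equiv n w w' \<Longrightarrow> (\<And>y z. knuth_step n y z \<Longrightarrow> f y = f z) \<Longrightarrow> f w = f w'"
  unfolding plac_equiv_def by (rule equivclp_invariant)

lemma plac_equiv_mset: "plac_equiv n w w' \<Longrightarrow> mset w = mset w'"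
  using plac_equiv_invariant knuth_step_mset by metis

lemma plac_equiv_words: "plac_equiv n w w' \<Longrightarrow> w \<in> words n \<Longrightarrow> w' \<in> words n"
  using plac_equiv_mset[of n w w'] by (simp add: lists_eq_set flip: set_mset_mset)

lemma plac_equiv_append_context:
  assumes "plac_equiv n w w'" "u \<in> words n" "v \<in> words n"
  shows "plac_equiv n (u @ w @ v) (u @ w' @ v)"
  using assms(1) unfolding plac_equiv_def
proof (induction rule: equivclp_induct)
  case (step y z)
  then show ?case
    using knuth_step_append_context[OF _ assms(2,3)] equivclp_into_equivclp by metis
qed simp

lemma plac_equiv_knuth1:
  "a \<le> b \<Longrightarrow> b < c \<Longrightarrow> [a, c, b] \<in> words n \<Longrightarrow> plac_equiv n [a, c, b] [c, a, b]"
  unfolding plac_equiv_def using knuth_step.knuth1[of "[]" n "[]" a b c] by auto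

lemma plac_equiv_knuth2:
  "a < b \<Longrightarrow> b \<le> c \<Longrightarrow> [b, a, c] \<in> words n \<Longrightarrow> plac_equiv n [b, c, a] [b, a, c]"
  unfolding plac_equiv_def using knuth_step.knuth2[of "[]" n "[]" a b c] by auto

lemma plac_class_eq_iff:
  assumes "w \<in> words n" "w' \<in> words n"
  shows "plac_class n w = plac_class n w' \<longleftrightarrow> plac_equiv n w w'"
proof
  assume "plac_class n w = plac_class n w'"
  then show "plac_equiv n w w'"
    using assms(2) unfolding plac_class_def by (metis (mono_tags) mem_Collect_eq plac_equiv_refl)
next
  assume "plac_equiv n w w'"
  then show "plac_class n w = plac_class n w'"
    unfolding plac_class_def using plac_equiv_sym plac_equiv_trans by blast
qed

lemma plac_class_eqI: "plac_equiv n w w' \<Longrightarrow> plac_class n w = plac_class n w'"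
  unfolding plac_class_def using plac_equiv_sym plac_equiv_trans by blast

section \<open>Schensted row insertion\<close>

lemma plac_equiv_commute_past_row:
  assumes "sorted r" "\<forall>z\<in>set r. z \<le> d" "d < c" "r @ [c, d] \<in> words n"
  shows "plac_equiv n (r @ [c, d]) (c # r @ [d])"
  using assms
proof (induction r arbitrary: d rule: rev_induct)
  case (snoc z r)
  have "plac_equiv n [z, c, d] [c, z, d]"
    using snoc.prems by (intro plac_equiv_knuth1) auto
  then have "plac_equiv n (r @ [z, c, d] @ []) (r @ [c, z, d] @ [])"
    using snoc.prems by (intro plac_equiv_append_context) auto
  then have "plac_equiv n (r @ [z, c, d]) (r @ [c, z, d])" by simp
  also have "plac_equiv n (r @ [c, z]) (c # r @ [z])"
    using snoc.prems by (intro snoc.IH) (auto simp: sorted_append)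
  then have "plac_equiv n ([] @ (r @ [c, z]) @ [d]) ([] @ (c # r @ [z]) @ [d])"
    using snoc.prems by (intro plac_equiv_append_context) auto
  then have "plac_equiv n (r @ [c, z, d]) (c # r @ [z, d])" by simp
  finally show ?case by simp
qed simp

lemma plac_equiv_bump:
  assumes "x < b" "sorted (b # B)" "b # B @ [x] \<in> words n"
  shows "plac_equiv n (b # B @ [x]) (b # x # B)"
  using assms
proof (induction B arbitrary: b)
  case (Cons e B)
  have "plac_equiv n (e # B @ [x]) (e # x # B)"
    using Cons.prems by (intro Cons.IH) auto
  then have "plac_equiv n ([b] @ (e # B @ [x]) @ []) ([b] @ (e # x # B) @ [])"
    using Cons.prems by (intro plac_equiv_append_context) auto
  then have "plac_equiv n (b # e # B @ [x]) (b # e # x # B)" by simp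
  also have "plac_equiv n [b, e, x] [b, x, e]"
    using Cons.prems by (intro plac_equiv_knuth2) auto
  then have "plac_equiv n ([] @ [b, e, x] @ B) ([] @ [b, x, e] @ B)"
    using Cons.prems by (intro plac_equiv_append_context) auto
  then have "plac_equiv n (b # e # x # B) (b # x # e # B)" by simp
  finally show ?case by simp
qed simp

lemma plac_equiv_row_insert:
  assumes "sorted (P @ y # B)" "\<forall>z\<in>set P. z \<le> x" "x < y" "P @ y # B @ [x] \<in> words n"
  shows "plac_equiv n (P @ y # B @ [x]) (y # P @ x # B)"
proof -
  have "plac_equiv n (y # B @ [x]) (y # x # B)"
    using assms by (intro plac_equiv_bump) (auto simp: sorted_append)
  then have "plac_equiv n (P @ (y # B @ [x]) @ []) (P @ (y # x # B) @ [])"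
    using assms by (intro plac_equiv_append_context) auto
  then have "plac_equiv n (P @ y # B @ [x]) (P @ y # x # B)" by simp
  also have "plac_equiv n (P @ [y, x]) (y # P @ [x])"
    using assms by (intro plac_equiv_commute_past_row) (auto simp: sorted_append)
  then have "plac_equiv n ([] @ (P @ [y, x]) @ B) ([] @ (y # P @ [x]) @ B)"
    using assms by (intro plac_equiv_append_context) auto
  then have "plac_equiv n (P @ y # x # B) (y # P @ x # B)" by simp
  finally show ?thesis .
qed

lemma plac_equiv_insert_word:
  assumes "sorted T" "T @ v \<in> words n" "\<forall>x\<in>set v. p \<le> x"
  shows "\<exists>Z T'. plac_equiv n (T @ v) (Z @ T') \<and> sorted T' \<and> (\<forall>z\<in>set Z. p < z)"
  using assms(2,3)
proof (induction v rule: rev_induct)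
  case Nil
  show ?case using assms(1) by (intro exI[of _ "[]"] exI[of _ T]) simp
next
  case (snoc x v)
  then obtain Z T' where equiv: "plac_equiv n (T @ v) (Z @ T')"
    and T': "sorted T'" and Z: "\<forall>z\<in>set Z. p < z" by auto
  have "plac_equiv n ((T @ v) @ [x]) ((Z @ T') @ [x])"
    using plac_equiv_append_context[OF equiv, of "[]" "[x]"] snoc.prems by simp
  then have equiv': "plac_equiv n (T @ v @ [x]) (Z @ T' @ [x])" by simp
  have x: "p \<le> x" using snoc.prems by simp
  show ?case
  proof (cases "\<forall>z\<in>set T'. z \<le> x")
    case True
    then show ?thesis using equiv' T' Z by (intro exI[of _ Z] exI[of _ "T' @ [x]"]) (auto simp: sorted_append)
  next
    case False
    define P where "P = takeWhile (\<lambda>z. z \<le> x) T'"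
    obtain y B where PyB: "T' = P @ y # B" and "x < y"
      using False unfolding P_def
      by (metis takeWhile_dropWhile_id dropWhile_eq_Nil_conv not_le_imp_less
          dropWhile_eq_Cons_conv list.exhaust)
    have "\<forall>z\<in>set P. z \<le> x" unfolding P_def by (auto dest: set_takeWhileD)
    moreover have ZT'x: "Z @ P @ y # B @ [x] \<in> words n"
      using plac_equiv_words[OF equiv' snoc.prems(1)] PyB by simp
    ultimately have "plac_equiv n (P @ y # B @ [x]) (y # P @ x # B)"
      using T' PyB \<open>x < y\<close> by (intro plac_equiv_row_insert) auto
    then have "plac_equiv n (Z @ (P @ y # B @ [x]) @ []) (Z @ (y # P @ x # B) @ [])"
      using ZT'x by (intro plac_equiv_append_context) auto
    then have bump: "plac_equiv n (Z @ T' @ [x]) ((Z @ [y]) @ P @ x # B)"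
      using PyB by simp
    have "sorted (P @ x # B)"
      using T' PyB \<open>x < y\<close> \<open>\<forall>z\<in>set P. z \<le> x\<close> by (auto simp: sorted_append)
    then show ?thesis using plac_equiv_trans[OF equiv' bump] PyB Z x \<open>x < y\<close>
      by (intro exI[of _ "Z @ [y]"] exI[of _ "P @ x # B"]) auto
  qed
qed

lemma plac_cshift_append_swap:
  "x \<in> words n \<Longrightarrow> y \<in> words n \<Longrightarrow> plac_cshift n (plac_class n (x @ y)) (plac_class n (y @ x))"
  unfolding plac_cshift_def by blast

lemma symp_plac_cshift: "symp (plac_cshift n)"
  unfolding plac_cshift_def symp_def by blast

lemma relpowp_symp: "symp R \<Longrightarrow> (R ^^ k) x y \<Longrightarrow> (R ^^ k) y x"
proof (induction k arbitrary: y)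
  case (Suc k)
  then obtain z where "(R ^^ k) x z" "R z y" by (meson relpowp_Suc_E)
  then show ?case using Suc relpowp_Suc_I2 by (metis sympD)
qed simp

lemma plac_component_mset:
  assumes "(plac_cshift n)\<^sup>*\<^sup>* (plac_class n w0) t" "w0 \<in> words n"
  shows "\<exists>w\<in>words n. t = plac_class n w \<and> mset w = mset w0"
  using assms(1)
proof (induction rule: rtranclp_induct)
  case (step m t)
  then obtain w where w: "w \<in> words n" "m = plac_class n w" "mset w = mset w0" by auto
  from step(2) obtain x y where xy: "x \<in> words n" "y \<in> words n"
    "m = plac_class n (x @ y)" "t = plac_class n (y @ x)"
    unfolding plac_cshift_def by blast
  have "plac_equiv n (x @ y) w"
    using plac_class_eq_iff[of "x @ y" n w] xy w by auto
  then have "mset (x @ y) = mset w0" using plac_equiv_mset w by metis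
  then show ?case using xy w by (intro bexI[of _ "y @ x"]) (auto simp: add.commute)
qed (use assms in auto)

lemma plac_reachable_mset:
  assumes "(plac_cshift n)\<^sup>*\<^sup>* (plac_class n w0) (plac_class n w)" "w0 \<in> words n" "w \<in> words n"
  shows "mset w = mset w0"
proof -
  obtain u where "u \<in> words n" "plac_class n w = plac_class n u" "mset u = mset w0"
    using plac_component_mset[OF assms(1,2)] by blast
  then show ?thesis using plac_class_eq_iff[OF assms(3)] plac_equiv_mset by metis
qed

lemma plac_cshift_path_sorted_prefix:
  assumes "w \<in> words n"
  shows "\<exists>T v. ((plac_cshift n) ^^ j) (plac_class n w) (plac_class n (T @ v)) \<and> sorted T
           \<and> T @ v \<in> words n \<and> (\<forall>x\<in>set v. j < x)"
proof (induction j)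
  case 0
  show ?case using assms by (intro exI[of _ "[]"] exI[of _ w]) auto
next
  case (Suc j)
  then obtain T v where path: "((plac_cshift n) ^^ j) (plac_class n w) (plac_class n (T @ v))"
    and T: "sorted T" "T @ v \<in> words n" and v: "\<forall>x\<in>set v. j < x" by auto
  have "\<forall>x\<in>set v. Suc j \<le> x" using v by auto
  then obtain Z T' where equiv: "plac_equiv n (T @ v) (Z @ T')" and T': "sorted T'"
    and Z: "\<forall>z\<in>set Z. Suc j < z"
    using plac_equiv_insert_word[OF T] by blast
  have "Z @ T' \<in> words n" using plac_equiv_words[OF equiv T(2)] .
  then have "plac_cshift n (plac_class n (T @ v)) (plac_class n (T' @ Z))"
    using plac_class_eqI[OF equiv] plac_cshift_append_swap[of Z n T'] by simp
  then show ?case using relpowp_Suc_I[OF path] T' Z \<open>Z @ T' \<in> words n\<close> by fastforce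
qed

lemma plac_cshift_path_normal_form:
  assumes "w \<in> words n"
  shows "\<exists>a T. ((plac_cshift n) ^^ (n - 2)) (plac_class n w) (plac_class n (replicate a n @ T))
           \<and> sorted T \<and> replicate a n @ T \<in> words n"
proof -
  obtain T v where path: "((plac_cshift n) ^^ (n - 2)) (plac_class n w) (plac_class n (T @ v))"
    and T: "sorted T" "T @ v \<in> words n" and v: "\<forall>x\<in>set v. n - 2 < x"
    using plac_cshift_path_sorted_prefix[OF assms] by blast
  have "\<forall>x\<in>set v. n - 1 \<le> x" using v by auto
  then obtain Z T' where equiv: "plac_equiv n (T @ v) (Z @ T')" and T': "sorted T'"
    and Z: "\<forall>z\<in>set Z. n - 1 < z"
    using plac_equiv_insert_word[OF T] by blast
  have ZT': "Z @ T' \<in> words n" using plac_equiv_words[OF equiv T(2)] .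
  have "Z = replicate (length Z) n"
  proof (intro replicate_length_same[symmetric] ballI)
    fix z assume "z \<in> set Z"
    then have "z \<le> n" "n - 1 < z" using Z ZT' by auto
    then show "z = n" by linarith
  qed
  then show ?thesis using path plac_class_eqI[OF equiv] T' ZT' by metis
qed

lemma plac_cshift_normal_forms:
  assumes "sorted T" "sorted T'" "replicate a n @ T \<in> words n" "replicate a' n @ T' \<in> words n"
    and "mset (replicate a n @ T) = mset (replicate a' n @ T')" "a' \<le> a"
  shows "plac_cshift n (plac_class n (replicate a n @ T)) (plac_class n (replicate a' n @ T'))"
proof -
  have "sorted (T @ replicate (a - a') n)" using assms(1,3) by (auto simp: sorted_append)
  moreover have split: "replicate a n = replicate (a - a') n @ replicate a' n"
    using assms(6) by (simp add: replicate_add[symmetric])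
  then have "mset (T @ replicate (a - a') n) = mset T'"
    using assms(5) by (simp add: add.commute add.left_commute)
  ultimately have "T @ replicate (a - a') n = T'"
    using assms(2) by (metis properties_for_sort sorted_sort_id)
  moreover have "plac_cshift n (plac_class n (replicate (a - a') n @ (replicate a' n @ T)))
                   (plac_class n ((replicate a' n @ T) @ replicate (a - a') n))"
    using assms(3,6) by (intro plac_cshift_append_swap) auto
  ultimately show ?thesis by (simp add: split)
qed

lemma plac_cshift_path_same_content:
  assumes "w \<in> words n" "w' \<in> words n" "mset w = mset w'" "2 \<le> n"
  shows "((plac_cshift n) ^^ (2 * n - 3)) (plac_class n w) (plac_class n w')"
proof -
  obtain a T where path: "((plac_cshift n) ^^ (n - 2)) (plac_class n w) (plac_class n (replicate a n @ T))"
    and T: "sorted T" "replicate a n @ T \<in> words n"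
    using plac_cshift_path_normal_form[OF assms(1)] by blast
  obtain a' T' where path': "((plac_cshift n) ^^ (n - 2)) (plac_class n w') (plac_class n (replicate a' n @ T'))"
    and T': "sorted T'" "replicate a' n @ T' \<in> words n"
    using plac_cshift_path_normal_form[OF assms(2)] by blast
  have "mset (replicate a n @ T) = mset (replicate a' n @ T')"
    using plac_reachable_mset[OF relpowp_imp_rtranclp[OF path] assms(1) T(2)]
      plac_reachable_mset[OF relpowp_imp_rtranclp[OF path'] assms(2) T'(2)] assms(3) by simp
  then have "plac_cshift n (plac_class n (replicate a n @ T)) (plac_class n (replicate a' n @ T'))"
    using plac_cshift_normal_forms[OF T(1) T'(1) T(2) T'(2)]
      plac_cshift_normal_forms[OF T'(1) T(1) T'(2) T(2)] symp_plac_cshift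
    by (metis nat_le_linear sympD)
  then have "((plac_cshift n) ^^ (Suc (n - 2) + (n - 2))) (plac_class n w) (plac_class n w')"
    using relpowp_trans[OF relpowp_Suc_I[OF path] relpowp_symp[OF symp_plac_cshift path']] by blast
  moreover have "Suc (n - 2) + (n - 2) = 2 * n - 3" using assms(4) by simp
  ultimately show ?thesis by metis
qed

lemma plac_dist_le: "((plac_cshift n) ^^ k) s t \<Longrightarrow> plac_dist n s t \<le> k"
  unfolding plac_dist_def by (rule Least_le)

lemma plac_dist_path: "((plac_cshift n) ^^ k) s t \<Longrightarrow> ((plac_cshift n) ^^ plac_dist n s t) s t"
  unfolding plac_dist_def by (rule LeastI)

lemma plac_dist_le_k_plac:
  assumes "s \<in> plac_elems n" "t \<in> plac_component n s"
  shows "enat (plac_dist n s t) \<le> k_plac n"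
proof -
  have "(s, t) \<in> plac_component n s \<times> plac_component n s"
    using assms(2) unfolding plac_component_def by auto
  then have "enat (plac_dist n s t) \<le> comp_diameter n (plac_component n s)"
    unfolding comp_diameter_def by (rule SUP_upper2) simp
  also have "\<dots> \<le> k_plac n" unfolding k_plac_def using assms(1) by (rule SUP_upper)
  finally show ?thesis .
qed

lemma k_plac_le:
  assumes "2 \<le> n"
  shows "k_plac n \<le> enat (2 * n - 3)"
  unfolding k_plac_def comp_diameter_def
proof (intro SUP_least, clarify)
  fix s t t' assume s: "s \<in> plac_elems n" and "t \<in> plac_component n s" "t' \<in> plac_component n s"
  obtain w0 where w0: "w0 \<in> words n" "s = plac_class n w0"
    using s unfolding plac_elems_def by blast
  obtain w w' where w: "w \<in> words n" "t = plac_class n w" "mset w = mset w0"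
    and w': "w' \<in> words n" "t' = plac_class n w'" "mset w' = mset w0"
    using plac_component_mset[of n w0] w0 \<open>t \<in> plac_component n s\<close> \<open>t' \<in> plac_component n s\<close>
    unfolding plac_component_def by blast
  have "((plac_cshift n) ^^ (2 * n - 3)) t t'"
    using plac_cshift_path_same_content[OF w(1) w'(1) _ assms] w w' by simp
  then have "plac_dist n t t' \<le> 2 * n - 3" by (rule plac_dist_le)
  then show "enat (plac_dist n (fst (t, t')) (snd (t, t'))) \<le> enat (2 * n - 3)" by simp
qed

section \<open>Inverse descents\<close>

fun occurs_before :: "'a list \<Rightarrow> 'a \<Rightarrow> 'a \<Rightarrow> bool" where
  "occurs_before [] x y = False"
| "occurs_before (z # zs) x y = ((z = x \<and> y \<in> set zs) \<or> occurs_before zs x y)"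

lemma occurs_before_append:
  "occurs_before (xs @ ys) x y \<longleftrightarrow> occurs_before xs x y \<or> occurs_before ys x y \<or> (x \<in> set xs \<and> y \<in> set ys)"
  by (induction xs) auto

lemma occurs_before_set: "occurs_before xs x y \<Longrightarrow> x \<in> set xs \<and> y \<in> set xs"
  by (induction xs) auto

lemma occurs_before_sorted: "sorted xs \<Longrightarrow> occurs_before xs x y \<Longrightarrow> x \<le> y"
  by (induction xs) auto

definition inv_descents :: "nat \<Rightarrow> nat list \<Rightarrow> int" where
  "inv_descents n w = (\<Sum>i=1..<n. of_bool (occurs_before w (Suc i) i))"

lemma occurs_before_append_context:
  "set w = set w' \<Longrightarrow> occurs_before w x y = occurs_before w' x y
    \<Longrightarrow> occurs_before (u @ w @ v) x y = occurs_before (u @ w' @ v) x y"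
  by (simp add: occurs_before_append)

lemma knuth_step_inv_descents: "knuth_step n w w' \<Longrightarrow> inv_descents n w = inv_descents n w'"
proof (induction rule: knuth_step.induct)
  case (knuth1 u v a b c)
  have "occurs_before (u @ [a, c, b] @ v) (Suc i) i = occurs_before (u @ [c, a, b] @ v) (Suc i) i" for i
    using knuth1 by (intro occurs_before_append_context) auto
  then show ?case unfolding inv_descents_def by simp
next
  case (knuth2 u v a b c)
  have "occurs_before (u @ [b, a, c] @ v) (Suc i) i = occurs_before (u @ [b, c, a] @ v) (Suc i) i" for i
    using knuth2 by (intro occurs_before_append_context) auto
  then show ?case unfolding inv_descents_def by simp
qed

lemma plac_equiv_inv_descents: "plac_equiv n w w' \<Longrightarrow> inv_descents n w = inv_descents n w'"
  using plac_equiv_invariant knuth_step_inv_descents by metis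

lemma inv_descents_append_swap:
  assumes "distinct (x @ y)" "set (x @ y) = {1..n}" "1 \<le> n"
  shows "inv_descents n (x @ y) \<le> inv_descents n (y @ x) + 1"
proof -
  define f :: "nat \<Rightarrow> int" where "f i = of_bool (i \<in> set x)" for i
  have telescope: "of_bool (occurs_before (x @ y) (Suc i) i) - of_bool (occurs_before (y @ x) (Suc i) i)
                   = f (Suc i) - f i" if "i \<in> {1..<n}" for i
  proof -
    have "i \<in> set (x @ y)" "Suc i \<in> set (x @ y)" using that assms(2) by auto
    then show ?thesis using assms(1) unfolding f_def
      by (auto simp: occurs_before_append dest: occurs_before_set)
  qed
  have "inv_descents n (x @ y) - inv_descents n (y @ x) = (\<Sum>i=1..<n. f (Suc i) - f i)"
    unfolding inv_descents_def sum_subtractf[symmetric] using telescope by (rule sum.cong[OF refl])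
  also have "\<dots> = f n - f 1" using sum_Suc_diff'[OF assms(3)] .
  finally show ?thesis unfolding f_def by (cases "n \<in> set x"; cases "1 \<in> set x") auto
qed

lemma plac_cshift_inv_descents:
  assumes "plac_cshift n (plac_class n w) (plac_class n w')" "w \<in> words n" "w' \<in> words n"
    and "mset w = mset [1..<Suc n]" "1 \<le> n"
  shows "inv_descents n w \<le> inv_descents n w' + 1"
proof -
  obtain x y where xy: "x \<in> words n" "y \<in> words n"
    "plac_class n w = plac_class n (x @ y)" "plac_class n w' = plac_class n (y @ x)"
    using assms(1) unfolding plac_cshift_def by blast
  have "plac_equiv n w (x @ y)" "plac_equiv n w' (y @ x)"
    using xy assms(2,3) plac_class_eq_iff by auto
  moreover from this have "mset (x @ y) = mset [1..<Suc n]"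
    using assms(4) plac_equiv_mset by metis
  then have "distinct (x @ y)" "set (x @ y) = {1..n}"
    by (metis distinct_upt mset_eq_imp_distinct_iff, metis atLeastLessThanSuc_atLeastAtMost mset_eq_setD set_upt)
  ultimately show ?thesis
    using inv_descents_append_swap assms(5) plac_equiv_inv_descents by metis
qed

lemma plac_cshift_path_inv_descents:
  assumes "((plac_cshift n) ^^ k) (plac_class n w0) (plac_class n w)" "w0 \<in> words n" "w \<in> words n"
    and "mset w0 = mset [1..<Suc n]" "1 \<le> n"
  shows "inv_descents n w0 \<le> inv_descents n w + int k"
  using assms(1,3)
proof (induction k arbitrary: w)
  case 0
  then have "plac_equiv n w0 w" using plac_class_eq_iff assms(2) by simp
  then show ?case using plac_equiv_inv_descents by simp
next
  case (Suc k)
  then obtain m where path: "((plac_cshift n) ^^ k) (plac_class n w0) m"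
    and step: "plac_cshift n m (plac_class n w)"
    by (meson relpowp_Suc_E)
  obtain w1 where w1: "w1 \<in> words n" "m = plac_class n w1" "mset w1 = mset w0"
    using plac_component_mset[OF relpowp_imp_rtranclp[OF path] assms(2)] by blast
  have "inv_descents n w0 \<le> inv_descents n w1 + int k"
    using Suc.IH[of w1] path w1 by blast
  moreover have "inv_descents n w1 \<le> inv_descents n w + 1"
    using step w1 Suc.prems(2) assms(4,5) by (intro plac_cshift_inv_descents) auto
  ultimately show ?case by simp
qed

lemma inv_descents_column:
  assumes "1 \<le> n"
  shows "inv_descents n (rev [1..<Suc n]) = int n - 1"
proof -
  have column: "occurs_before (rev [1..<Suc m]) (Suc i) i \<longleftrightarrow> 1 \<le> i \<and> Suc i \<le> m" for m i
    by (induction m) auto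
  have "inv_descents n (rev [1..<Suc n]) = (\<Sum>i=1..<n. 1)"
    unfolding inv_descents_def
  proof (rule sum.cong)
    fix i assume "i \<in> {1..<n}"
    then show "of_bool (occurs_before (rev [1..<Suc n]) (Suc i) i) = (1::int)"
      using column[of n i] by simp
  qed simp
  then show ?thesis using assms by simp
qed

lemma inv_descents_row: "inv_descents n [1..<Suc n] = 0"
  unfolding inv_descents_def using occurs_before_sorted[of "[1..<Suc n]"]
  by (auto intro!: sum.neutral simp del: upt_Suc) fastforce

lemma k_plac_ge:
  assumes "2 \<le> n"
  shows "enat (n - 1) \<le> k_plac n"
proof -
  let ?col = "rev [1..<Suc n]" and ?row = "[1..<Suc n]"
  let ?s = "plac_class n ?col" and ?t = "plac_class n ?row"
  have words: "?col \<in> words n" "?row \<in> words n" and content: "mset ?col = mset ?row"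
    by auto
  have path: "((plac_cshift n) ^^ (2 * n - 3)) ?s ?t"
    using plac_cshift_path_same_content words content assms by blast
  have "inv_descents n ?col \<le> inv_descents n ?row + int (plac_dist n ?s ?t)"
    by (rule plac_cshift_path_inv_descents[OF plac_dist_path[OF path] words]) (use content assms in auto)
  moreover have "inv_descents n ?col = int n - 1" using assms by (intro inv_descents_column) simp
  ultimately have "n - 1 \<le> plac_dist n ?s ?t" using inv_descents_row[of n] by linarith
  moreover have "enat (plac_dist n ?s ?t) \<le> k_plac n"
    using words relpowp_imp_rtranclp[OF path]
    by (intro plac_dist_le_k_plac) (auto simp: plac_elems_def plac_component_def)
  ultimately show ?thesis using order_trans enat_ord_simps(1) by blast
qed

theorem mainTheorem2:
  fixes n :: nat
  assumes "n \<ge> 2"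
  shows "enat (n - 1) \<le> k_plac n \<and> k_plac n \<le> enat (2 * n - 3)"
  using k_plac_ge[OF assms] k_plac_le[OF assms] by simp

end
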